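(* Let $C$ be a nonsingular affine curve over $\mathbb{R}$ with $C(\mathbb{R})$ compact and non-empty. Let $g\colon C(\mathbb{R})\to\mathbb{R}$ be a continuous semi-algebraic function with $g(x)=0$ for only finitely many $x\in C(\mathbb{R})$. Then there exists $0\ne p\in\mathbb{R}[C]$ with $p^2\le|g|$ on $C(\mathbb{R})$.
   Context: A function $C(\mathbb{R})\to\mathbb{R}$ is semi-algebraic if its graph is a semi-algebraic subset of $C(\mathbb{R})\times\mathbb{R}$. *)

theory Defs
  imports "HOL-Analysis.Analysis"
begin

datatype 'v rpe = RConst real | RVar 'v | RAdd "'v rpe" "'v rpe" | RMul "'v rpe" "'v rpe"

fun reval :: "('v \<Rightarrow> 'a::{real_algebra_1,comm_ring_1}) \<Rightarrow> 'v rpe \<Rightarrow> 'a" where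
  "reval x (RConst c) = of_real c"
| "reval x (RVar v) = x v"
| "reval x (RAdd a b) = reval x a + reval x b"
| "reval x (RMul a b) = reval x a * reval x b"

fun rdiff :: "'v \<Rightarrow> 'v rpe \<Rightarrow> 'v rpe" where
  "rdiff v (RConst c) = RConst 0"
| "rdiff v (RVar w) = RConst (if v = w then 1 else 0)"
| "rdiff v (RAdd a b) = RAdd (rdiff v a) (rdiff v b)"
| "rdiff v (RMul a b) = RAdd (RMul (rdiff v a) b) (RMul a (rdiff v b))"

text \<open>The polynomial ring R[x_v : v in 'n], realised (faithfully, since C is infinite)
  as the ring of polynomial functions with real coefficients on complex affine space.\<close>
definition Rpoly :: "(('n \<Rightarrow> complex) \<Rightarrow> complex) set" where
  "Rpoly = {(\<lambda>z. reval z e) | e. True}"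

definition poly_ideal :: "(('n \<Rightarrow> complex) \<Rightarrow> complex) set \<Rightarrow> bool" where
  "poly_ideal I \<longleftrightarrow> I \<subseteq> Rpoly \<and> (\<lambda>z. 0) \<in> I \<and>
     (\<forall>a\<in>I. \<forall>b\<in>I. (\<lambda>z. a z + b z) \<in> I) \<and>
     (\<forall>f\<in>Rpoly. \<forall>a\<in>I. (\<lambda>z. f z * a z) \<in> I)"

definition prime_poly_ideal :: "(('n \<Rightarrow> complex) \<Rightarrow> complex) set \<Rightarrow> bool" where
  "prime_poly_ideal P \<longleftrightarrow> poly_ideal P \<and> P \<noteq> Rpoly \<and>
     (\<forall>a\<in>Rpoly. \<forall>b\<in>Rpoly. (\<lambda>z. a z * b z) \<in> P \<longrightarrow> a \<in> P \<or> b \<in> P)"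

text \<open>Krull dimension of R[x]/I equals 1, for a prime ideal I: there is a chain of primes
  of length 1 above I but none of length 2.\<close>
definition krull_dim_one :: "(('n \<Rightarrow> complex) \<Rightarrow> complex) set \<Rightarrow> bool" where
  "krull_dim_one I \<longleftrightarrow>
     (\<exists>J. prime_poly_ideal J \<and> I \<subset> J) \<and>
     \<not> (\<exists>J1 J2. prime_poly_ideal J1 \<and> prime_poly_ideal J2 \<and> I \<subset> J1 \<and> J1 \<subset> J2)"

definition affine_curve :: "(('n::finite \<Rightarrow> complex) \<Rightarrow> complex) set \<Rightarrow> bool" where
  "affine_curve I \<longleftrightarrow> prime_poly_ideal I \<and> krull_dim_one I"

text \<open>Nonsingularity via the Jacobian criterion at every complex point: the Jacobian
  matrix of I has rank n - 1 = n - dim C.\<close>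
definition nonsingular_curve :: "(('n::finite \<Rightarrow> complex) \<Rightarrow> complex) set \<Rightarrow> bool" where
  "nonsingular_curve I \<longleftrightarrow> affine_curve I \<and>
     (\<forall>z. (\<forall>f\<in>I. f z = 0) \<longrightarrow>
        (\<exists>es :: nat \<Rightarrow> 'n rpe.
           (\<forall>j < CARD('n) - 1. (\<lambda>w. reval w (es j)) \<in> I) \<and>
           (\<forall>c :: nat \<Rightarrow> complex.
              (\<forall>v. (\<Sum>j<CARD('n) - 1. c j * reval z (rdiff v (es j))) = 0)
              \<longrightarrow> (\<forall>j < CARD('n) - 1. c j = 0))))"

definition real_points :: "(('n \<Rightarrow> complex) \<Rightarrow> complex) set \<Rightarrow> ('n \<Rightarrow> real) set" where
  "real_points I = {x. \<forall>f\<in>I. f (\<lambda>v. complex_of_real (x v)) = 0}"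

text \<open>Value of a polynomial at a real point (real, since coefficients are real).\<close>
definition rval :: "(('n \<Rightarrow> complex) \<Rightarrow> complex) \<Rightarrow> ('n \<Rightarrow> real) \<Rightarrow> real" where
  "rval p x = Re (p (\<lambda>v. complex_of_real (x v)))"

inductive_set semialgebraic :: "('m \<Rightarrow> real) set set" where
  basic: "{x. 0 < reval x e} \<in> semialgebraic"
| compl: "S \<in> semialgebraic \<Longrightarrow> - S \<in> semialgebraic"
| union: "S \<in> semialgebraic \<Longrightarrow> T \<in> semialgebraic \<Longrightarrow> S \<union> T \<in> semialgebraic"

text \<open>A function g : C(R) \<rightarrow> R is semi-algebraic if its graph is a semi-algebraic subset of
  C(R) \<times> R \<subseteq> R^n \<times> R (the extra coordinate is indexed by None).\<close>
definition semialg_fun :: "('n \<Rightarrow> real) set \<Rightarrow> (('n \<Rightarrow> real) \<Rightarrow> real) \<Rightarrow> bool" where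
  "semialg_fun S g \<longleftrightarrow>
     {y :: 'n option \<Rightarrow> real. (\<lambda>v. y (Some v)) \<in> S \<and> y None = g (\<lambda>v. y (Some v))}
       \<in> semialgebraic"

end

theory Submission
  imports Defs "HOL-Computational_Algebra.Polynomial"
begin

text \<open>
  The graph of \<open>g\<close> is cut out by sign conditions on finitely many polynomials \<open>e(x, y)\<close>, and
  an isolated point of a fibre of such a set must be a root of one of them. So at every
  \<open>x \<in> C(\<real>)\<close> the value \<open>g x\<close> is a root of some nonzero \<open>e(x, \<cdot>)\<close>; when \<open>g x \<noteq> 0\<close>, the root bound
  for the lowest nonzero coefficient \<open>q(x)\<close> of \<open>e(x, \<cdot>)\<close> gives \<open>|q x| \<le> K |g x|\<close>, with \<open>K\<close> uniform
  by compactness. Multiplying all coefficient polynomials not in the ideal of \<open>C\<close> with, for each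
  of the finitely many zeros of \<open>g\<close>, a polynomial vanishing there but not on \<open>C\<close> (which exists
  since \<open>C\<close> has dimension one), and scaling by a small constant, yields \<open>p\<close>; it does not lie
  in the ideal of \<open>C\<close> because that ideal is prime.
\<close>

lemma reval_of_real: "reval (\<lambda>v. complex_of_real (x v)) e = complex_of_real (reval x e)"
  by (induct e) auto

lemma Rpoly_at_real_point: "f \<in> Rpoly \<Longrightarrow> f (\<lambda>v. complex_of_real (x v)) = complex_of_real (rval f x)"
  unfolding Rpoly_def rval_def by (auto simp: reval_of_real)

lemma Rpoly_reval: "(\<lambda>z. reval z e) \<in> Rpoly"
  unfolding Rpoly_def by auto

lemma rval_reval: "rval (\<lambda>z. reval z e) = (\<lambda>x. reval x e)"
  by (simp add: fun_eq_iff rval_def reval_of_real)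

lemma Rpoly_const: "(\<lambda>z. of_real c) \<in> Rpoly"
  using Rpoly_reval[of "RConst c"] by simp

lemma Rpoly_add: "f \<in> Rpoly \<Longrightarrow> h \<in> Rpoly \<Longrightarrow> (\<lambda>z. f z + h z) \<in> Rpoly"
  unfolding Rpoly_def by (auto intro: exI[of _ "RAdd _ _"])

lemma Rpoly_mult: "f \<in> Rpoly \<Longrightarrow> h \<in> Rpoly \<Longrightarrow> (\<lambda>z. f z * h z) \<in> Rpoly"
  unfolding Rpoly_def by (auto intro: exI[of _ "RMul _ _"])

lemma Rpoly_prod: "finite F \<Longrightarrow> F \<subseteq> Rpoly \<Longrightarrow> (\<lambda>z. \<Prod>f\<in>F. f z) \<in> Rpoly"
proof (induct F rule: finite_induct)
  case empty then show ?case using Rpoly_const[of 1] by simp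
next
  case (insert f F) then show ?case using Rpoly_mult[of f "\<lambda>z. \<Prod>f\<in>F. f z"] by simp
qed

lemma rval_const_mult_prod:
  assumes "finite F" "F \<subseteq> Rpoly"
  shows "rval (\<lambda>z. of_real c * (\<Prod>f\<in>F. f z)) x = c * (\<Prod>f\<in>F. rval f x)"
proof -
  have "(\<Prod>f\<in>F. f (\<lambda>v. complex_of_real (x v))) = (\<Prod>f\<in>F. complex_of_real (rval f x))"
    using assms by (intro prod.cong) (auto simp: Rpoly_at_real_point)
  then show ?thesis by (simp add: rval_def del: of_real_prod add: of_real_prod[symmetric])
qed

lemma continuous_on_rval:
  fixes f :: "('n \<Rightarrow> complex) \<Rightarrow> complex"
  assumes "f \<in> Rpoly"
  shows "continuous_on S (rval f)"
proof -
  obtain e where "f = (\<lambda>z. reval z e)" using assms unfolding Rpoly_def by auto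
  moreover have "continuous_on S (\<lambda>x::'n \<Rightarrow> real. reval x e)"
  proof (induct e)
    case (RVar v) then show ?case
      using continuous_on_subset[OF continuous_on_product_coordinates[of v]] by auto
  qed (auto intro!: continuous_intros)
  ultimately show ?thesis by (simp add: rval_reval)
qed

lemma uniform_bound_on_compact:
  fixes h :: "'i \<Rightarrow> 'a::topological_space \<Rightarrow> real"
  assumes "compact S" "finite F" "\<And>i. i \<in> F \<Longrightarrow> continuous_on S (h i)"
  shows "\<exists>B. \<forall>i\<in>F. \<forall>x\<in>S. \<bar>h i x\<bar> \<le> B"
proof -
  have "compact (\<Union>i\<in>F. h i ` S)"
    using assms by (intro compact_UN compact_continuous_image) auto
  then obtain B where "\<forall>y\<in>(\<Union>i\<in>F. h i ` S). \<bar>y\<bar> \<le> B"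
    using compact_imp_bounded bounded_real by blast
  then show ?thesis by blast
qed

lemma rval_eq_0_if_mem_ideal: "f \<in> I \<Longrightarrow> x \<in> real_points I \<Longrightarrow> rval f x = 0"
  unfolding real_points_def rval_def by auto

lemma poly_ideal_add: "poly_ideal P \<Longrightarrow> a \<in> P \<Longrightarrow> b \<in> P \<Longrightarrow> (\<lambda>z. a z + b z) \<in> P"
  unfolding poly_ideal_def by simp

lemma poly_ideal_mult: "poly_ideal P \<Longrightarrow> f \<in> Rpoly \<Longrightarrow> a \<in> P \<Longrightarrow> (\<lambda>z. f z * a z) \<in> P"
  unfolding poly_ideal_def by simp

lemma prime_poly_idealD:
  "prime_poly_ideal P \<Longrightarrow> a \<in> Rpoly \<Longrightarrow> b \<in> Rpoly \<Longrightarrow> (\<lambda>z. a z * b z) \<in> P \<Longrightarrow> a \<in> P \<or> b \<in> P"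
  unfolding prime_poly_ideal_def by simp

lemma const_notin_prime_poly_ideal:
  assumes P: "prime_poly_ideal P" and "c \<noteq> 0"
  shows "(\<lambda>z. of_real c) \<notin> P"
proof
  assume c: "(\<lambda>z. of_real c) \<in> P"
  have ideal: "poly_ideal P" using P unfolding prime_poly_ideal_def by simp
  have "u \<in> P" if u: "u \<in> Rpoly" for u
  proof -
    have "(\<lambda>z. (of_real (1 / c) * u z) * of_real c) \<in> P"
      by (rule poly_ideal_mult[OF ideal Rpoly_mult[OF Rpoly_const u] c])
    moreover have "(\<lambda>z. (of_real (1 / c) * u z) * of_real c) = u"
      using \<open>c \<noteq> 0\<close> by (simp add: fun_eq_iff)
    ultimately show "u \<in> P" by simp
  qed
  moreover have "P \<subseteq> Rpoly" "P \<noteq> Rpoly"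
    using P unfolding prime_poly_ideal_def poly_ideal_def by simp_all
  ultimately show False by blast
qed

lemma const_mult_prod_notin_prime_poly_ideal:
  assumes "prime_poly_ideal P" "c \<noteq> 0" "finite F" "F \<subseteq> Rpoly - P"
  shows "(\<lambda>z. of_real c * (\<Prod>f\<in>F. f z)) \<notin> P"
  using assms(3,4)
proof (induct F rule: finite_induct)
  case empty then show ?case using const_notin_prime_poly_ideal[OF assms(1,2)] by simp
next
  case (insert f F)
  have "(\<lambda>z. of_real c * (\<Prod>f\<in>F. f z)) \<in> Rpoly"
    using insert Rpoly_mult[OF Rpoly_const Rpoly_prod] by blast
  then have "(\<lambda>z. f z * (of_real c * (\<Prod>f\<in>F. f z))) \<notin> P"
    using insert prime_poly_idealD[OF assms(1)] by blast
  then show ?case using insert by (simp add: ac_simps)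
qed

text \<open>This is where the dimension of the curve enters: a prime \<open>J\<close> strictly above \<open>I\<close>
  contains no nonzero constant, so some element of \<open>J - I\<close> shifted by a constant vanishes at \<open>a\<close>.\<close>
lemma exists_poly_vanishing_at_point:
  assumes "affine_curve I" "a \<in> real_points I"
  shows "\<exists>p\<in>Rpoly. p \<notin> I \<and> rval p a = 0"
proof -
  obtain J where J: "prime_poly_ideal J" "I \<subset> J"
    using assms(1) unfolding affine_curve_def krull_dim_one_def by auto
  then have idJ: "poly_ideal J" unfolding prime_poly_ideal_def by auto
  obtain f where f: "f \<in> J" "f \<notin> I" using J(2) by auto
  have fR: "f \<in> Rpoly" using f idJ unfolding poly_ideal_def by auto
  define r where "r = rval f a"
  define h where "h = (\<lambda>z. f z + of_real (- r))"
  have hR: "h \<in> Rpoly" unfolding h_def using Rpoly_add[OF fR Rpoly_const] .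
  have ha: "rval h a = 0"
    using Rpoly_at_real_point[OF fR] by (simp add: h_def rval_def r_def)
  show ?thesis
  proof (cases "r = 0 \<or> h \<notin> I")
    case True
    then show ?thesis using fR f(2) hR ha unfolding r_def by blast
  next
    case False
    then have "h \<in> J" using J(2) by auto
    then have "(\<lambda>z. f z + of_real (- 1) * h z) \<in> J"
      by (intro poly_ideal_add[OF idJ f(1)] poly_ideal_mult[OF idJ Rpoly_const])
    moreover have "(\<lambda>z. f z + of_real (- 1) * h z) = (\<lambda>z. of_real r)"
      by (simp add: h_def fun_eq_iff)
    ultimately show ?thesis using const_notin_prime_poly_ideal[OF J(1)] False by auto
  qed
qed

lemma semialgebraic_sign_invariant:
  "S \<in> semialgebraic \<Longrightarrow>
     \<exists>E. \<forall>y y'. (\<forall>e\<in>set E. sgn (reval y e :: real) = sgn (reval y' e)) \<longrightarrow> (y \<in> S \<longleftrightarrow> y' \<in> S)"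
proof (induct rule: semialgebraic.induct)
  case (basic e)
  show ?case by (intro exI[of _ "[e]"]) (auto simp: sgn_if split: if_splits)
next
  case (compl S) then show ?case by (metis ComplI Compl_iff)
next
  case (union S T)
  then obtain E1 E2 where
    "\<forall>y y'. (\<forall>e\<in>set E1. sgn (reval y e :: real) = sgn (reval y' e)) \<longrightarrow> (y \<in> S \<longleftrightarrow> y' \<in> S)"
    "\<forall>y y'. (\<forall>e\<in>set E2. sgn (reval y e :: real) = sgn (reval y' e)) \<longrightarrow> (y \<in> T \<longleftrightarrow> y' \<in> T)"
    by blast
  then have "(y \<in> S \<longleftrightarrow> y' \<in> S) \<and> (y \<in> T \<longleftrightarrow> y' \<in> T)"
    if "\<forall>e\<in>set (E1 @ E2). sgn (reval y e :: real) = sgn (reval y' e)" for y y'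
    using that by simp
  then show ?case by (intro exI[of _ "E1 @ E2"]) blast
qed

definition graph_point :: "('n \<Rightarrow> real) \<Rightarrow> real \<Rightarrow> 'n option \<Rightarrow> real" where
  "graph_point x s = (\<lambda>v. case v of None \<Rightarrow> s | Some v \<Rightarrow> x v)"

fun fiber_poly :: "('n \<Rightarrow> real) \<Rightarrow> 'n option rpe \<Rightarrow> real poly" where
  "fiber_poly x (RConst c) = [:c:]"
| "fiber_poly x (RVar None) = [:0, 1:]"
| "fiber_poly x (RVar (Some v)) = [:x v:]"
| "fiber_poly x (RAdd a b) = fiber_poly x a + fiber_poly x b"
| "fiber_poly x (RMul a b) = fiber_poly x a * fiber_poly x b"

fun fiber_degree :: "'n option rpe \<Rightarrow> nat" where
  "fiber_degree (RConst c) = 0"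
| "fiber_degree (RVar None) = 1"
| "fiber_degree (RVar (Some v)) = 0"
| "fiber_degree (RAdd a b) = max (fiber_degree a) (fiber_degree b)"
| "fiber_degree (RMul a b) = fiber_degree a + fiber_degree b"

lemma poly_fiber_poly: "poly (fiber_poly x e) s = reval (graph_point x s) e"
proof (induct e)
  case (RVar w) then show ?case by (cases w) (auto simp: graph_point_def)
qed auto

lemma degree_fiber_poly_le: "degree (fiber_poly x e) \<le> fiber_degree e"
proof (induct e)
  case (RVar w) then show ?case by (cases w) auto
next
  case (RAdd a b) then show ?case
    using degree_add_le[of "fiber_poly x a" "max (fiber_degree a) (fiber_degree b)" "fiber_poly x b"]
    by simp
next
  case (RMul a b) then show ?case
    using degree_mult_le[of "fiber_poly x a" "fiber_poly x b"] by simp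
qed auto

lemma exists_rpe_sum:
  fixes F :: "nat \<Rightarrow> ('n \<Rightarrow> real) \<Rightarrow> real"
  assumes "\<And>i. \<exists>c. \<forall>x. reval x c = F i x"
  shows "\<exists>c. \<forall>x. reval x c = (\<Sum>i\<le>n. F i x)"
proof (induct n)
  case 0 then show ?case using assms by simp
next
  case (Suc n)
  then obtain c1 where "\<forall>x. reval x c1 = (\<Sum>i\<le>n. F i x)" by blast
  moreover obtain c2 where "\<forall>x. reval x c2 = F (Suc n) x" using assms by blast
  ultimately show ?case by (intro exI[of _ "RAdd c1 c2"]) simp
qed

lemma coeff_fiber_poly_rpe: "\<exists>c. \<forall>x. reval x c = coeff (fiber_poly x e) k"
proof (induct e arbitrary: k)
  case (RConst r) show ?case
    by (rule exI[of _ "RConst (if k = 0 then r else 0)"]) (cases k, auto)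
next
  case (RVar w)
  show ?case
  proof (cases w)
    case None then show ?thesis
      by (intro exI[of _ "RConst (if k = 1 then 1 else 0)"]) (auto simp: coeff_pCons split: nat.split)
  next
    case (Some v) then show ?thesis
      by (intro exI[of _ "if k = 0 then RVar v else RConst 0"]) (auto simp: coeff_pCons split: nat.split)
  qed
next
  case (RAdd a b)
  then obtain c1 c2 where "\<forall>x. reval x c1 = coeff (fiber_poly x a) k" "\<forall>x. reval x c2 = coeff (fiber_poly x b) k"
    by blast
  then show ?case by (intro exI[of _ "RAdd c1 c2"]) simp
next
  case (RMul a b)
  have "\<exists>c. \<forall>x. reval x c = coeff (fiber_poly x a) i * coeff (fiber_poly x b) (k - i)" for i
  proof -
    obtain c1 c2 where "\<forall>x. reval x c1 = coeff (fiber_poly x a) i" "\<forall>x. reval x c2 = coeff (fiber_poly x b) (k - i)"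
      using RMul by blast
    then show ?thesis by (intro exI[of _ "RMul c1 c2"]) simp
  qed
  then show ?case by (simp add: coeff_mult exists_rpe_sum)
qed

lemma eventually_sgn_poly_eq:
  fixes q :: "real poly"
  assumes "poly q t \<noteq> 0 \<or> q = 0"
  shows "\<forall>\<^sub>F s in at t. sgn (poly q s) = sgn (poly q t)"
proof (cases "q = 0")
  case False
  then have "poly q t \<noteq> 0" using assms by simp
  then have "0 < poly q t * poly q t" using not_real_square_gt_zero by blast
  moreover have "((\<lambda>s. poly q s * poly q t) \<longlongrightarrow> poly q t * poly q t) (at t)"
    by (intro tendsto_intros)
  ultimately have "\<forall>\<^sub>F s in at t. 0 < poly q s * poly q t" using order_tendstoD(1) by blast
  then show ?thesis by eventually_elim (auto simp: zero_less_mult_iff)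
qed simp

text \<open>If no \<open>e(x, \<cdot>)\<close> vanishes at \<open>t\<close> without vanishing identically, all signs are locally
  constant near \<open>t\<close>, so the fibre of \<open>G\<close> over \<open>x\<close> could not be the single point \<open>t\<close>.\<close>
lemma isolated_fiber_point_is_root:
  assumes E: "\<forall>y y'. (\<forall>e\<in>set E. sgn (reval y e :: real) = sgn (reval y' e)) \<longrightarrow> (y \<in> G \<longleftrightarrow> y' \<in> G)"
    and G: "\<And>s. graph_point x s \<in> G \<longleftrightarrow> s = t"
  shows "\<exists>e\<in>set E. fiber_poly x e \<noteq> 0 \<and> poly (fiber_poly x e) t = 0"
proof (rule ccontr)
  assume "\<not> ?thesis"
  then have "\<forall>\<^sub>F s in at t. \<forall>e\<in>set E. sgn (poly (fiber_poly x e) s) = sgn (poly (fiber_poly x e) t)"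
    by (intro eventually_ball_finite) (auto intro: eventually_sgn_poly_eq)
  moreover have "\<forall>\<^sub>F s in at t. s \<noteq> t" by (rule eventually_neq_at_within)
  ultimately obtain s where "s \<noteq> t" "\<forall>e\<in>set E. sgn (poly (fiber_poly x e) s) = sgn (poly (fiber_poly x e) t)"
    using eventually_happens'[OF at_neq_bot eventually_conj] by blast
  then have "graph_point x s \<in> G \<longleftrightarrow> graph_point x t \<in> G"
    using E by (simp add: poly_fiber_poly)
  then show False using G \<open>s \<noteq> t\<close> by blast
qed

lemma semialg_fun_values_are_roots:
  assumes "semialg_fun S g"
  shows "\<exists>E. \<forall>x\<in>S. \<exists>e\<in>set E. fiber_poly x e \<noteq> 0 \<and> poly (fiber_poly x e) (g x) = 0"
proof -
  define G where "G = {y. (\<lambda>v. y (Some v)) \<in> S \<and> y None = g (\<lambda>v. y (Some v))}"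
  obtain E where E: "\<forall>y y'. (\<forall>e\<in>set E. sgn (reval y e :: real) = sgn (reval y' e)) \<longrightarrow> (y \<in> G \<longleftrightarrow> y' \<in> G)"
    using semialgebraic_sign_invariant assms unfolding semialg_fun_def G_def by blast
  have "graph_point x s \<in> G \<longleftrightarrow> s = g x" if "x \<in> S" for x s
    using that by (simp add: G_def graph_point_def)
  then show ?thesis using isolated_fiber_point_is_root[OF E] by blast
qed

lemma lowest_coeff_eq:
  fixes p :: "'a::field poly"
  assumes "poly p t = 0" "t \<noteq> 0" "degree p \<le> D" "m \<le> D" "\<forall>k<m. coeff p k = 0"
  shows "coeff p m = - (\<Sum>k\<in>{m<..D}. coeff p k * t ^ (k - m))"
proof -
  have "t ^ m * (\<Sum>k\<in>{m..D}. coeff p k * t ^ (k - m)) = (\<Sum>k\<in>{m..D}. coeff p k * t ^ k)"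
    unfolding sum_distrib_left by (intro sum.cong) (auto simp: power_add[symmetric])
  also have "\<dots> = (\<Sum>k\<le>D. coeff p k * t ^ k)"
    using assms(5) by (intro sum.mono_neutral_left) auto
  also have "\<dots> = (\<Sum>k\<le>degree p. coeff p k * t ^ k)"
    using assms(3) by (intro sum.mono_neutral_right) (auto simp: coeff_eq_0)
  also have "\<dots> = 0" using assms(1) by (simp add: poly_altdef)
  finally have "(\<Sum>k\<in>{m..D}. coeff p k * t ^ (k - m)) = 0" using assms(2) by simp
  moreover have "{m..D} = insert m {m<..D}" using assms(4) by auto
  ultimately show ?thesis by (simp add: eq_neg_iff_add_eq_0)
qed

lemma lowest_coeff_bound:
  fixes p :: "real poly"
  assumes root: "poly p t = 0" "t \<noteq> 0" and "p \<noteq> 0" and deg: "degree p \<le> D"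
    and tB: "\<bar>t\<bar> \<le> B" and B1: "1 \<le> B" and A: "\<forall>k\<le>D. \<bar>coeff p k\<bar> \<le> A"
  shows "\<exists>m\<le>D. coeff p m \<noteq> 0 \<and> \<bar>coeff p m\<bar> \<le> \<bar>t\<bar> * (real D * A * B ^ D)"
proof -
  define m where "m = (LEAST k. coeff p k \<noteq> 0)"
  have lead: "coeff p (degree p) \<noteq> 0" using \<open>p \<noteq> 0\<close> by simp
  have m: "coeff p m \<noteq> 0" "m \<le> degree p" "\<forall>k<m. coeff p k = 0"
    unfolding m_def
    using LeastI[of "\<lambda>k. coeff p k \<noteq> 0", OF lead] Least_le[of "\<lambda>k. coeff p k \<noteq> 0", OF lead]
    by (auto dest: not_less_Least)
  have A0: "0 \<le> A" using A by (meson abs_ge_zero order_trans zero_le)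
  have "\<bar>coeff p k * t ^ (k - m)\<bar> \<le> \<bar>t\<bar> * (A * B ^ D)" if k: "k \<in> {m<..D}" for k
  proof -
    have "\<bar>t\<bar> ^ (k - m - 1) \<le> B ^ (k - m - 1)" using tB by (intro power_mono) auto
    also have "\<dots> \<le> B ^ D" using k B1 by (intro power_increasing) auto
    finally have "\<bar>t\<bar> * \<bar>t\<bar> ^ (k - m - 1) \<le> \<bar>t\<bar> * B ^ D" by (simp add: mult_left_mono)
    moreover have "k - m = Suc (k - m - 1)" using k by auto
    ultimately have "\<bar>t ^ (k - m)\<bar> \<le> \<bar>t\<bar> * B ^ D" by (metis power_Suc power_abs)
    moreover have "\<bar>coeff p k\<bar> \<le> A" using A k by simp
    ultimately have "\<bar>coeff p k\<bar> * \<bar>t ^ (k - m)\<bar> \<le> A * (\<bar>t\<bar> * B ^ D)"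
      using A0 by (intro mult_mono) auto
    then show ?thesis by (simp add: abs_mult ac_simps)
  qed
  then have "\<bar>\<Sum>k\<in>{m<..D}. coeff p k * t ^ (k - m)\<bar> \<le> (\<Sum>k\<in>{m<..D}. \<bar>t\<bar> * (A * B ^ D))"
    by (intro order_trans[OF sum_abs sum_mono]) auto
  then have "\<bar>coeff p m\<bar> \<le> (\<Sum>k\<in>{m<..D}. \<bar>t\<bar> * (A * B ^ D))"
    using lowest_coeff_eq[OF root deg _ m(3)] m(2) deg by simp
  also have "\<dots> = real (D - m) * (\<bar>t\<bar> * (A * B ^ D))" by simp
  also have "\<dots> \<le> real D * (\<bar>t\<bar> * (A * B ^ D))"
    using A0 B1 by (intro mult_right_mono) auto
  also have "\<dots> = \<bar>t\<bar> * (real D * A * B ^ D)" by simp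
  finally show ?thesis using m deg by (intro exI[of _ m]) auto
qed

lemma semialg_fun_coeff_bound:
  fixes g :: "('n \<Rightarrow> real) \<Rightarrow> real"
  assumes "compact S" "continuous_on S g" "semialg_fun S g"
  shows "\<exists>Q K. finite Q \<and> Q \<subseteq> Rpoly \<and>
           (\<forall>x\<in>S. g x \<noteq> 0 \<longrightarrow> (\<exists>q\<in>Q. rval q x \<noteq> 0 \<and> \<bar>rval q x\<bar> \<le> K * \<bar>g x\<bar>))"
proof -
  obtain E where E: "\<forall>x\<in>S. \<exists>e\<in>set E. fiber_poly x e \<noteq> 0 \<and> poly (fiber_poly x e) (g x) = 0"
    using semialg_fun_values_are_roots[OF assms(3)] by blast
  have "\<exists>B. \<forall>i\<in>{()}. \<forall>x\<in>S. \<bar>g x\<bar> \<le> B"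
    by (rule uniform_bound_on_compact) (simp_all add: assms(1,2))
  then obtain B where gB: "\<forall>x\<in>S. \<bar>g x\<bar> \<le> B" by blast
  define D where "D = (\<Sum>e\<in>set E. fiber_degree e)"
  have degD: "degree (fiber_poly x e) \<le> D" if "e \<in> set E" for x e
    using degree_fiber_poly_le[of x e] member_le_sum[OF that, of fiber_degree] unfolding D_def by simp
  obtain c :: "'n option rpe \<Rightarrow> nat \<Rightarrow> 'n rpe"
    where c: "\<And>e k x. reval x (c e k) = coeff (fiber_poly x e) k"
    using coeff_fiber_poly_rpe by metis
  define cf where "cf e k = (\<lambda>z :: 'n \<Rightarrow> complex. reval z (c e k))" for e k
  have cf: "cf e k \<in> Rpoly" "rval (cf e k) x = coeff (fiber_poly x e) k" for e k x
    unfolding cf_def by (simp_all add: Rpoly_reval rval_reval c)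
  define Q where "Q = case_prod cf ` (set E \<times> {..D})"
  have "\<exists>A. \<forall>(e, k)\<in>set E \<times> {..D}. \<forall>x\<in>S. \<bar>rval (cf e k) x\<bar> \<le> A"
    using uniform_bound_on_compact[OF assms(1), of "set E \<times> {..D}" "\<lambda>(e, k). rval (cf e k)"]
    by (auto intro: continuous_on_rval cf(1))
  then obtain A where A: "\<forall>(e, k)\<in>set E \<times> {..D}. \<forall>x\<in>S. \<bar>rval (cf e k) x\<bar> \<le> A" ..
  define B' where "B' = max 1 B"
  have "\<exists>q\<in>Q. rval q x \<noteq> 0 \<and> \<bar>rval q x\<bar> \<le> (real D * A * B' ^ D) * \<bar>g x\<bar>"
    if x: "x \<in> S" and "g x \<noteq> 0" for x
  proof -
    obtain e where e: "e \<in> set E" "fiber_poly x e \<noteq> 0" "poly (fiber_poly x e) (g x) = 0"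
      using E x by blast
    have "\<forall>k\<le>D. \<bar>coeff (fiber_poly x e) k\<bar> \<le> A" using A e(1) x by (auto simp: cf)
    moreover have "\<bar>g x\<bar> \<le> B'" "1 \<le> B'" using gB x unfolding B'_def by force+
    ultimately obtain m where "m \<le> D" "coeff (fiber_poly x e) m \<noteq> 0"
        "\<bar>coeff (fiber_poly x e) m\<bar> \<le> \<bar>g x\<bar> * (real D * A * B' ^ D)"
      using lowest_coeff_bound[OF e(3) \<open>g x \<noteq> 0\<close> e(2) degD[OF e(1)]] by blast
    moreover have "cf e m \<in> Q" unfolding Q_def using e(1) \<open>m \<le> D\<close> by auto
    ultimately show ?thesis by (metis cf(2) mult.commute)
  qed
  moreover have "finite Q" "Q \<subseteq> Rpoly" unfolding Q_def using cf(1) by auto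
  ultimately show ?thesis by blast
qed

lemma abs_prod_le_factor_mult_power:
  fixes h :: "'a \<Rightarrow> real"
  assumes "finite F" "i \<in> F" "\<forall>j\<in>F. \<bar>h j\<bar> \<le> U" "1 \<le> U"
  shows "\<bar>\<Prod>j\<in>F. h j\<bar> \<le> \<bar>h i\<bar> * U ^ card F"
proof -
  have "\<bar>\<Prod>j\<in>F - {i}. h j\<bar> \<le> (\<Prod>j\<in>F - {i}. U)"
    unfolding abs_prod using assms(3) by (intro prod_mono) auto
  also have "\<dots> \<le> U ^ card F"
    using assms by (simp add: card_Diff_subset power_increasing)
  finally have "\<bar>h i\<bar> * \<bar>\<Prod>j\<in>F - {i}. h j\<bar> \<le> \<bar>h i\<bar> * U ^ card F"
    by (simp add: mult_left_mono)
  then show ?thesis using assms(1,2) by (simp add: prod.remove abs_mult)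
qed

text \<open>At each point one factor is \<open>O(|g|)\<close> and the others are bounded, so the square of the
  product is \<open>O(|g|)\<close>.\<close>
lemma scaled_prod_square_le:
  fixes h :: "'i \<Rightarrow> 'a::topological_space \<Rightarrow> real"
  assumes "compact S" "finite F" "\<And>i. i \<in> F \<Longrightarrow> continuous_on S (h i)"
    and small: "\<forall>x\<in>S. \<exists>i\<in>F. \<bar>h i x\<bar> \<le> K * \<bar>g x\<bar>"
  shows "\<exists>c>0. \<forall>x\<in>S. (c * (\<Prod>i\<in>F. h i x))\<^sup>2 \<le> \<bar>g x\<bar>"
proof -
  obtain U0 where U0: "\<forall>i\<in>F. \<forall>x\<in>S. \<bar>h i x\<bar> \<le> U0"
    using uniform_bound_on_compact[OF assms(1,2), of h] assms(3) by blast
  define U where "U = max 1 U0"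
  define K' where "K' = max 0 K"
  define M where "M = (K' + 1) * U ^ (2 * card F + 1)"
  have U: "1 \<le> U" "\<forall>i\<in>F. \<forall>x\<in>S. \<bar>h i x\<bar> \<le> U" using U0 unfolding U_def by force+
  have K': "0 \<le> K'" "K \<le> K'" unfolding K'_def by simp_all
  have M: "0 < M" unfolding M_def using U(1) K'(1) by simp
  have "(\<Prod>i\<in>F. h i x)\<^sup>2 \<le> \<bar>g x\<bar> * M" if x: "x \<in> S" for x
  proof -
    obtain i where i: "i \<in> F" "\<bar>h i x\<bar> \<le> K * \<bar>g x\<bar>" using small x by blast
    then have hK: "\<bar>h i x\<bar> \<le> K' * \<bar>g x\<bar>" using K'(2) by (meson abs_ge_zero mult_right_mono order_trans)
    have "\<bar>\<Prod>i\<in>F. h i x\<bar> \<le> \<bar>h i x\<bar> * U ^ card F"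
      using abs_prod_le_factor_mult_power[OF assms(2) i(1), of "\<lambda>i. h i x"] U x by blast
    then have "(\<Prod>i\<in>F. h i x)\<^sup>2 \<le> (\<bar>h i x\<bar> * U ^ card F)\<^sup>2"
      by (metis abs_ge_zero power2_abs power_mono)
    also have "\<dots> = \<bar>h i x\<bar> * \<bar>h i x\<bar> * U ^ (2 * card F)"
      by (simp add: power2_eq_square power_mult ac_simps)
    also have "\<dots> \<le> (K' * \<bar>g x\<bar>) * U * U ^ (2 * card F)"
      using hK U i x K'(1) by (intro mult_right_mono mult_mono) auto
    also have "\<dots> \<le> \<bar>g x\<bar> * M"
      unfolding M_def using U(1) by (simp add: algebra_simps mult_left_mono)
    finally show ?thesis .
  qed
  then have "\<forall>x\<in>S. (1 / sqrt M * (\<Prod>i\<in>F. h i x))\<^sup>2 \<le> \<bar>g x\<bar>"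
    using M by (simp add: power_mult_distrib power_divide divide_le_eq mult.commute)
  then show ?thesis using M by (intro exI[of _ "1 / sqrt M"]) simp
qed

lemma exists_dominated_factors:
  assumes curve: "affine_curve I" and "compact (real_points I)" "continuous_on (real_points I) g"
    and "semialg_fun (real_points I) g" "finite {x \<in> real_points I. g x = 0}"
  shows "\<exists>F K. finite F \<and> F \<subseteq> Rpoly - I \<and> (\<forall>x\<in>real_points I. \<exists>f\<in>F. \<bar>rval f x\<bar> \<le> K * \<bar>g x\<bar>)"
proof -
  define Z where "Z = {x \<in> real_points I. g x = 0}"
  obtain Q K where Q: "finite Q" "Q \<subseteq> Rpoly"
      "\<forall>x\<in>real_points I. g x \<noteq> 0 \<longrightarrow> (\<exists>q\<in>Q. rval q x \<noteq> 0 \<and> \<bar>rval q x\<bar> \<le> K * \<bar>g x\<bar>)"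
    using semialg_fun_coeff_bound[OF assms(2-4)] by blast
  have "\<forall>a\<in>Z. \<exists>p\<in>Rpoly. p \<notin> I \<and> rval p a = 0"
    using exists_poly_vanishing_at_point[OF curve] unfolding Z_def by blast
  then obtain w where w: "\<forall>a\<in>Z. w a \<in> Rpoly \<and> w a \<notin> I \<and> rval (w a) a = 0"
    by metis
  define F where "F = (Q - I) \<union> w ` Z"
  have "finite F" "F \<subseteq> Rpoly - I"
    using Q(1,2) w assms(5) unfolding F_def Z_def by auto
  moreover have "\<exists>f\<in>F. \<bar>rval f x\<bar> \<le> K * \<bar>g x\<bar>" if "x \<in> real_points I" for x
  proof (cases "g x = 0")
    case True
    then show ?thesis using w that unfolding F_def Z_def by force
  next
    case False
    then show ?thesis using Q(3) that rval_eq_0_if_mem_ideal unfolding F_def by blast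
  qed
  ultimately show ?thesis by blast
qed

theorem lemma1p5:
  fixes I :: "(('n::finite \<Rightarrow> complex) \<Rightarrow> complex) set"
    and g :: "('n \<Rightarrow> real) \<Rightarrow> real"
  assumes "nonsingular_curve I"
    and "compact (real_points I)" and "real_points I \<noteq> {}"
    and "continuous_on (real_points I) g"
    and "semialg_fun (real_points I) g"
    and "finite {x \<in> real_points I. g x = 0}"
  shows "\<exists>p\<in>Rpoly. p \<notin> I \<and> (\<forall>x\<in>real_points I. (rval p x)\<^sup>2 \<le> \<bar>g x\<bar>)"
proof -
  have curve: "affine_curve I"
    using assms(1) unfolding nonsingular_curve_def by (rule conjunct1)
  then have prime: "prime_poly_ideal I" unfolding affine_curve_def by (rule conjunct1)
  obtain F K where F: "finite F" "F \<subseteq> Rpoly - I"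
    and small: "\<forall>x\<in>real_points I. \<exists>f\<in>F. \<bar>rval f x\<bar> \<le> K * \<bar>g x\<bar>"
    using exists_dominated_factors[OF curve assms(2,4-6)] by blast
  obtain c where c: "c > 0" "\<forall>x\<in>real_points I. (c * (\<Prod>f\<in>F. rval f x))\<^sup>2 \<le> \<bar>g x\<bar>"
    using scaled_prod_square_le[OF assms(2) F(1) _ small] F(2) continuous_on_rval by blast
  define p where "p = (\<lambda>z. of_real c * (\<Prod>f\<in>F. f z))"
  have "p \<in> Rpoly" unfolding p_def using F by (intro Rpoly_mult Rpoly_const Rpoly_prod) auto
  moreover have "p \<notin> I"
    unfolding p_def using const_mult_prod_notin_prime_poly_ideal[OF prime _ F] c(1) by simp
  moreover have "rval p x = c * (\<Prod>f\<in>F. rval f x)" for x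
    unfolding p_def using rval_const_mult_prod F by blast
  ultimately show ?thesis using c(2) by auto
qed

end
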